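(* Let $d,r\ge2$. The map $\mathsf v_{d,r}(\mathbf u,\mathbf w)=(\mathbf w,\mathbf u+\langle\mathbf 1,\mathbf w\rangle\mathbf 1)$ restricts to a bijection $\mathbb M_{d,r}\to T_{r,d}$. Define $V:\mathcal M_{d,r}\to\mathrm{Sp}(\mathcal M_{r,d})$ by $V(\mathbf u,\mathbf w)=f_{\mathsf v_{d,r}(\mathbf u,\mathbf w)}$, and $W:\mathcal M_{r,d}\to\mathrm{Sp}(\mathcal M_{d,r})$ by $W(\mathbf y,\mathbf z)=f_{\mathsf v_{r,d}(\mathbf y,\mathbf z)}$ (using the identifications of elements with $\mathbb M_{d,r},\mathbb M_{r,d}$ and of points with $T_{d,r},T_{r,d}$). Then $V$ and $W$ are bijections, $V(m)(n)=W(n)(m)$ for all $m\in\mathcal M_{d,r}$, $n\in\mathcal M_{r,d}$ (explicitly, both equal $\langle\mathbf w,\mathbf y\rangle+\langle\mathbf u,\mathbf z\rangle+\langle\mathbf 1,\mathbf z\rangle\langle\mathbf 1,\mathbf w\rangle$ for $m=(\mathbf u,\mathbf w)$, $n=(\mathbf y,\mathbf z)$), and for each $k\in[d]$, $V^{-1}(\mathrm{Sp}(\mathcal M_{r,d},k))=\{(\mathbf u,\mathbf w)\in\mathbb M_{d,r}:u_k=0\}$, which is the set of elements of the maximal cone $\{u_k=\min_ju_j\}$ of $\Sigma(\mathcal M_{d,r})$ (in chart $M^{(1)}_{d,r}$); symmetrically for $W$. Hence $\mathcal M_{d,r}$ and $\mathcal M_{r,d}$ form a strict dual $\mathbb Z$-pair;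 in particular $\mathcal M_{d,d}$ is strictly self-dual.
   Context: The polyptych lattice $\mathcal M_{d,r}$ over $\mathbb Z$ (rank $d+r-1$): coordinates $(\mathbf u,\mathbf w)\in\mathbb Z^d\times\mathbb Z^r$; charts $M^{(i)}_{d,r}=\{(\mathbf u,\mathbf w):w_i=0\}$, $i\in[r]$; mutations $\mu_{i,i+1}(\mathbf u,\mathbf w)=(\mathbf u,w_1,\dots,w_{i-1},\min_ju_j-\sum_kw_k,0,w_{i+2},\dots,w_r)$, all others by composition/inversion. Elements of a polyptych lattice are classes of the disjoint union of charts under $m\sim\mu(m)$; its PL fan $\Sigma$ is the coarsest complete fan of cones on whose chart images all mutations are linear; for $\mathcal M_{d,r}$ its maximal cones are $\{u_k=\min\{u_1,\dots,u_d\}\}$, $k\in[d]$, in every chart. Points of a polyptych lattice with charts $M_\alpha$: $p$ with $p(m)+p(m')=\min_\alpha p(\pi_\alpha^{-1}(\pi_\alpha m+\pi_\alpha m'))$ and $p(\lambda m)=\lambda p(m)$; $\mathrm{Sp}(\mathcal M,\alpha)$ are those linear on chart $\alpha$. $\mathbf 1$ denotes the all-ones vector of the appropriate length; $\mathbb M_{d,r}=\{(\mathbf u,\mathbf w)\in\mathbb Z^d\times\mathbb Z^r:\min_ju_j=0\}$ is identified with the elements of $\mathcal M_{d,r}$ via $(\mathbf u,\mathbf w)\mapsto(\varphi_i(\mathbf u,\mathbf w))_i$, $\varphi_i(\mathbf u,\mathbf w)=(\mathbf u+\langle\mathbf 1,\mathbf w\rangle\mathbf 1,\mathbf w)$ with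 $i$-th $\mathbf w$-coordinate set to $0$. $T_{d,r}=\{(\mathbf a,\mathbf b)\in\mathbb Z^d\times\mathbb Z^r:\sum a_j=\min_ib_i\}$; $(\mathbf a,\mathbf b)\mapsto f_{\mathbf a,\mathbf b}$, $f_{\mathbf a,\mathbf b}(\mathbf u,\mathbf w)=\langle\mathbf a,\mathbf u\rangle+\langle\mathbf b,\mathbf w\rangle$ on $\mathbb M_{d,r}$, identifies $T_{d,r}$ with $\mathrm{Sp}(\mathcal M_{d,r})$, and $T_{d,r}(i)=\{\sum a_j=b_i\}$ with $\mathrm{Sp}(\mathcal M_{d,r},i)$. $\mathcal M_{r,d},\mathbb M_{r,d},T_{r,d},\mathsf v_{r,d}$ are defined the same way with $d,r$ swapped (coordinates $(\mathbf y,\mathbf z)\in\mathbb Z^r\times\mathbb Z^d$). A strict dual $\mathbb Z$-pair consists of maps $V:\mathcal M\to\mathrm{Sp}(\mathcal N)$, $W:\mathcal N\to\mathrm{Sp}(\mathcal M)$ that are bijections, satisfy $V(m)(n)=W(n)(m)$, and such that the preimages of the sets $\mathrm{Sp}(\cdot,\gamma)$ are exactly the maximal cones of the PL fan (on both sides). *)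

theory Defs
  imports Main
begin

text \<open>Concrete model of the polyptych lattice M_{d,r}.  Vectors in Z^n are
  int lists of length n; indices are 0-based (so [d] becomes {0..<d},
  and chart M^(1) is chart index 0).\<close>

definition ip :: "int list \<Rightarrow> int list \<Rightarrow> int" where
  "ip a u = sum_list (map2 (*) a u)"

definition MM :: "nat \<Rightarrow> nat \<Rightarrow> (int list \<times> int list) set" where
  "MM d r = {(u, w). length u = d \<and> length w = r \<and> Min (set u) = 0}"

definition chart_coord :: "nat \<Rightarrow> int list \<times> int list \<Rightarrow> int list \<times> int list" where
  "chart_coord i m = (map (\<lambda>x. x + sum_list (snd m)) (fst m), (snd m)[i := 0])"

definition TT :: "nat \<Rightarrow> nat \<Rightarrow> (int list \<times> int list) set" where
  "TT d r = {(a, b). length a = d \<and> length b = r \<and> sum_list a = Min (set b)}"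

definition TTi :: "nat \<Rightarrow> nat \<Rightarrow> nat \<Rightarrow> (int list \<times> int list) set" where
  "TTi d r i = {(a, b) \<in> TT d r. sum_list a = b ! i}"

definition fpt :: "int list \<times> int list \<Rightarrow> int list \<times> int list \<Rightarrow> int" where
  "fpt t m = ip (fst t) (fst m) + ip (snd t) (snd m)"

text \<open>The point f_t of M_{d,r}, as a function on (the model MM d r of) the elements
  (extended by 0 outside).\<close>
definition point :: "nat \<Rightarrow> nat \<Rightarrow> int list \<times> int list \<Rightarrow> (int list \<times> int list \<Rightarrow> int)" where
  "point d r t = (\<lambda>m. if m \<in> MM d r then fpt t m else 0)"

definition Sp :: "nat \<Rightarrow> nat \<Rightarrow> (int list \<times> int list \<Rightarrow> int) set" where
  "Sp d r = point d r ` TT d r"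

definition Spc :: "nat \<Rightarrow> nat \<Rightarrow> nat \<Rightarrow> (int list \<times> int list \<Rightarrow> int) set" where
  "Spc d r i = point d r ` TTi d r i"

definition vmap :: "int list \<times> int list \<Rightarrow> int list \<times> int list" where
  "vmap m = (snd m, map (\<lambda>x. x + sum_list (snd m)) (fst m))"

definition Vmap :: "nat \<Rightarrow> nat \<Rightarrow> int list \<times> int list \<Rightarrow> (int list \<times> int list \<Rightarrow> int)" where
  "Vmap d r m = point r d (vmap m)"

text \<open>Elements of the maximal cone {u_k = min_j u_j} of the PL fan of M_{d,r},
  read in chart M^(1) (index 0).\<close>
definition max_cone :: "nat \<Rightarrow> nat \<Rightarrow> nat \<Rightarrow> (int list \<times> int list) set" where
  "max_cone d r k = {m \<in> MM d r. fst (chart_coord 0 m) ! k = Min (set (fst (chart_coord 0 m)))}"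

text \<open>Strict dual Z-pair between M_{d,r} and M_{r,d}: the charts of M_{r,d} are
  indexed by [d], those of M_{d,r} by [r]; maximal cones of M_{d,r} by [d],
  those of M_{r,d} by [r].\<close>
definition strict_dual_pair ::
  "nat \<Rightarrow> nat \<Rightarrow> (int list \<times> int list \<Rightarrow> (int list \<times> int list \<Rightarrow> int))
       \<Rightarrow> (int list \<times> int list \<Rightarrow> (int list \<times> int list \<Rightarrow> int)) \<Rightarrow> bool" where
  "strict_dual_pair d r V W \<longleftrightarrow>
     bij_betw V (MM d r) (Sp r d) \<and> bij_betw W (MM r d) (Sp d r) \<and>
     (\<forall>m \<in> MM d r. \<forall>n \<in> MM r d. V m n = W n m) \<and>
     (\<lambda>\<gamma>. {m \<in> MM d r. V m \<in> Spc r d \<gamma>}) ` {..<d} = max_cone d r ` {..<d} \<and>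
     (\<lambda>\<gamma>. {n \<in> MM r d. W n \<in> Spc d r \<gamma>}) ` {..<r} = max_cone r d ` {..<r}"

end

theory Submission
  imports Defs
begin

text \<open>Shifting \<open>u\<close> by \<open>\<langle>1,w\<rangle>\<close> turns the normalisation \<open>min u = 0\<close> of the
  elements into the condition \<open>\<Sum>a = min b\<close> defining the points, so \<open>v\<close> is a bijection
  with inverse \<open>(a, b) \<mapsto> (b - \<Sum>a, a)\<close>.  A point \<open>f\<^sub>a\<^sub>,\<^sub>b\<close> is determined by its values
  \<open>a\<^sub>i\<close>, \<open>b\<^sub>j\<close> at the elements \<open>(e\<^sub>i, 0)\<close> and \<open>(0, e\<^sub>j)\<close>; the former has minimum \<open>0\<close> only
  because \<open>e\<^sub>i\<close> has a second coordinate, which is where \<open>d, r \<ge> 2\<close> is needed.  Expanding \<open>V(u,w)(y,z)\<close> gives a formula symmetric in the two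
  arguments, and \<open>V(u,w)\<close> is linear on chart \<open>k\<close> iff \<open>\<Sum>w = u\<^sub>k + \<Sum>w\<close>, i.e. iff \<open>u\<^sub>k = 0 = min u\<close>;
  since the chart coordinates only shift \<open>u\<close> by a constant, this is the maximal cone \<open>k\<close>.\<close>

lemma Min_image_add_right:
  fixes c :: "'a :: linordered_ab_semigroup_add"
  assumes "finite A" and "A \<noteq> {}"
  shows "Min ((\<lambda>x. x + c) ` A) = Min A + c"
  using Min_add_commute[of A "\<lambda>x. x" c] assms by simp

lemma ip_eq_sum_nth: "length a = length b \<Longrightarrow> ip a b = (\<Sum>i<length a. a ! i * b ! i)"
  unfolding ip_def by (simp add: sum_list_sum_nth atLeast0LessThan)

lemma ip_commute: "length a = length b \<Longrightarrow> ip a b = ip b a"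
  by (simp add: ip_eq_sum_nth mult.commute)

lemma ip_map_add_left:
  "length u = length z \<Longrightarrow> ip (map (\<lambda>x. x + c) u) z = ip u z + c * sum_list z"
  by (simp add: ip_eq_sum_nth sum_list_sum_nth atLeast0LessThan algebra_simps
                sum.distrib sum_distrib_left)

lemma ip_replicate_zero: "length a = n \<Longrightarrow> ip a (replicate n 0) = 0"
  by (simp add: ip_eq_sum_nth)

lemma ip_unit_vector: "length a = n \<Longrightarrow> k < n \<Longrightarrow> ip a ((replicate n 0)[k := 1]) = a ! k"
  by (simp add: ip_eq_sum_nth nth_list_update if_distrib cong: if_cong)

lemma set_unit_vector:
  assumes "i < n" and "j < n" and "j \<noteq> i"
  shows "set ((replicate n (0::int))[i := 1]) = {0, 1}"
proof -
  have "(replicate n (0::int))[i := 1] ! j = 0" using assms by simp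
  then have "0 \<in> set ((replicate n (0::int))[i := 1])"
    by (metis assms(2) length_list_update length_replicate nth_mem)
  then show ?thesis
    using assms(1) set_update_subset_insert[of "replicate n (0::int)" i 1]
    by (auto simp: set_update_memI)
qed

lemma unit_zero_in_MM:
  assumes "2 \<le> r" and "i < r"
  shows "((replicate r 0)[i := 1], replicate d 0) \<in> MM r d"
proof -
  obtain j where "j < r" "j \<noteq> i"
    using assms by (intro that[of "if i = 0 then 1 else 0"]) auto
  then show ?thesis
    using set_unit_vector[OF assms(2)] by (simp add: MM_def)
qed

lemma zero_unit_in_MM:
  "0 < r \<Longrightarrow> (replicate r 0, (replicate d 0)[i := 1]) \<in> MM r d"
  by (simp add: MM_def)

lemma inj_on_point:
  assumes "2 \<le> r"
  shows "inj_on (point r d) (TT r d)"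
proof (rule inj_onI, clarify)
  fix a b a' b'
  assume t: "(a, b) \<in> TT r d" "(a', b') \<in> TT r d"
    and eq: "point r d (a, b) = point r d (a', b')"
  then have len: "length a = r" "length b = d" "length a' = r" "length b' = d"
    by (auto simp: TT_def)
  have fpt_eq: "fpt (a, b) m = fpt (a', b') m" if "m \<in> MM r d" for m
    using fun_cong[OF eq, of m] that by (simp add: point_def)
  have "a ! i = a' ! i" if "i < r" for i
    using fpt_eq[OF unit_zero_in_MM[OF assms that]] len that
    by (simp add: fpt_def ip_unit_vector ip_replicate_zero)
  moreover have "b ! i = b' ! i" if "i < d" for i
    using fpt_eq[OF zero_unit_in_MM[of r d i]] assms len that
    by (simp add: fpt_def ip_unit_vector ip_replicate_zero)
  ultimately show "a = a' \<and> b = b'"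
    using len by (simp add: list_eq_iff_nth_eq)
qed

lemma bij_betw_point: "2 \<le> r \<Longrightarrow> bij_betw (point r d) (TT r d) (Sp r d)"
  unfolding Sp_def by (rule inj_on_imp_bij_betw[OF inj_on_point])

lemma bij_betw_vmap:
  assumes "0 < d" and "0 < r"
  shows "bij_betw vmap (MM d r) (TT r d)"
proof (rule bij_betw_byWitness[where f' = "\<lambda>(a, b). (map (\<lambda>x. x - sum_list a) b, a)"])
  show "\<forall>m\<in>MM d r. (\<lambda>(a, b). (map (\<lambda>x. x - sum_list a) b, a)) (vmap m) = m"
    by (auto simp: vmap_def comp_def)
  show "\<forall>t\<in>TT r d. vmap ((\<lambda>(a, b). (map (\<lambda>x. x - sum_list a) b, a)) t) = t"
    by (auto simp: vmap_def comp_def)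
  show "vmap ` MM d r \<subseteq> TT r d"
    using assms by (auto simp: MM_def TT_def vmap_def Min_image_add_right)
  show "(\<lambda>(a, b). (map (\<lambda>x. x - sum_list a) b, a)) ` TT r d \<subseteq> MM d r"
  proof clarify
    fix a b assume t: "(a, b) \<in> TT r d"
    then have "b \<noteq> []" using assms by (auto simp: TT_def)
    then have "Min ((\<lambda>x. x + - sum_list a) ` set b) = Min (set b) - sum_list a"
      by (subst Min_image_add_right) auto
    then show "(map (\<lambda>x. x - sum_list a) b, a) \<in> MM d r"
      using t by (auto simp: MM_def TT_def)
  qed
qed

lemma Vmap_eq_point_comp_vmap: "Vmap d r = point r d \<circ> vmap"
  by (simp add: Vmap_def fun_eq_iff)

lemma bij_betw_Vmap:
  assumes "0 < d" and "2 \<le> r"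
  shows "bij_betw (Vmap d r) (MM d r) (Sp r d)"
  unfolding Vmap_eq_point_comp_vmap
  using assms by (intro bij_betw_trans[OF bij_betw_vmap bij_betw_point]) auto

lemma Vmap_apply:
  assumes "(u, w) \<in> MM d r" and "(y, z) \<in> MM r d"
  shows "Vmap d r (u, w) (y, z) = ip w y + ip u z + sum_list z * sum_list w"
  using assms by (simp add: Vmap_def point_def fpt_def vmap_def MM_def ip_map_add_left)

lemma Vmap_commute:
  assumes "(u, w) \<in> MM d r" and "(y, z) \<in> MM r d"
  shows "Vmap d r (u, w) (y, z) = Vmap r d (y, z) (u, w)"
  using assms Vmap_apply[OF assms] Vmap_apply[OF assms(2,1)]
  by (auto simp: MM_def ip_commute[of w y] ip_commute[of u z])

lemma Vmap_in_Spc_iff: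
  assumes "0 < d" and "2 \<le> r" and "k < d" and m: "(u, w) \<in> MM d r"
  shows "Vmap d r (u, w) \<in> Spc r d k \<longleftrightarrow> u ! k = 0"
proof -
  have "vmap (u, w) \<in> TT r d"
    using bij_betwE[OF bij_betw_vmap[of d r]] assms m by simp
  then have "Vmap d r (u, w) \<in> Spc r d k \<longleftrightarrow> vmap (u, w) \<in> TTi r d k"
    unfolding Vmap_def Spc_def
    by (rule inj_on_image_mem_iff[OF inj_on_point[OF assms(2)]]) (auto simp: TTi_def)
  also have "\<dots> \<longleftrightarrow> u ! k = 0"
    using \<open>vmap (u, w) \<in> TT r d\<close> m assms(3) by (auto simp: TTi_def vmap_def MM_def)
  finally show ?thesis .
qed

lemma Vmap_preimage_Spc:
  assumes "0 < d" and "2 \<le> r" and "k < d"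
  shows "{m \<in> MM d r. Vmap d r m \<in> Spc r d k} = {(u, w) \<in> MM d r. u ! k = 0}"
  using Vmap_in_Spc_iff[OF assms] by auto

lemma max_cone_eq:
  assumes "k < d"
  shows "{(u, w) \<in> MM d r. u ! k = 0} = max_cone d r k"
proof -
  have "u ! k = 0 \<longleftrightarrow> map (\<lambda>x. x + sum_list w) u ! k = Min (set (map (\<lambda>x. x + sum_list w) u))"
    if "(u, w) \<in> MM d r" for u w
  proof -
    have "u \<noteq> []" "Min (set u) = 0" "k < length u"
      using that assms by (auto simp: MM_def)
    then show ?thesis
      using Min_image_add_right[of "set u" "sum_list w"] by simp
  qed
  then show ?thesis
    by (auto simp: max_cone_def chart_coord_def)
qed

lemma strict_dual_pair_Vmap:
  assumes "2 \<le> d" and "2 \<le> r"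
  shows "strict_dual_pair d r (Vmap d r) (Vmap r d)"
proof -
  have "{m \<in> MM d r. Vmap d r m \<in> Spc r d k} = max_cone d r k" if "k < d" for k
    using Vmap_preimage_Spc[of d r k] max_cone_eq[of k d r] assms that by simp
  moreover have "{n \<in> MM r d. Vmap r d n \<in> Spc d r k} = max_cone r d k" if "k < r" for k
    using Vmap_preimage_Spc[of r d k] max_cone_eq[of k r d] assms that by simp
  ultimately show ?thesis
    unfolding strict_dual_pair_def
    using bij_betw_Vmap[of d r] bij_betw_Vmap[of r d] assms Vmap_commute
    by (auto intro!: image_cong)
qed

theorem mainTheorem17:
  fixes d r :: nat
  assumes "d \<ge> 2" and "r \<ge> 2"
  shows "bij_betw vmap (MM d r) (TT r d) \<and>
         bij_betw (Vmap d r) (MM d r) (Sp r d) \<and>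
         bij_betw (Vmap r d) (MM r d) (Sp d r) \<and>
         (\<forall>u w y z. (u, w) \<in> MM d r \<longrightarrow> (y, z) \<in> MM r d \<longrightarrow>
              Vmap d r (u, w) (y, z) = Vmap r d (y, z) (u, w) \<and>
              Vmap d r (u, w) (y, z) = ip w y + ip u z + sum_list z * sum_list w) \<and>
         (\<forall>k < d. {m \<in> MM d r. Vmap d r m \<in> Spc r d k} = {(u, w) \<in> MM d r. u ! k = 0} \<and>
                  {(u, w) \<in> MM d r. u ! k = 0} = max_cone d r k) \<and>
         (\<forall>k < r. {n \<in> MM r d. Vmap r d n \<in> Spc d r k} = {(y, z) \<in> MM r d. y ! k = 0} \<and>
                  {(y, z) \<in> MM r d. y ! k = 0} = max_cone r d k) \<and>
         strict_dual_pair d r (Vmap d r) (Vmap r d) \<and>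
         strict_dual_pair d d (Vmap d d) (Vmap d d)"
proof -
  have pos: "0 < d" "0 < r" using assms by simp_all
  show ?thesis
    using bij_betw_vmap[OF pos] bij_betw_Vmap[OF pos(1) assms(2)]
      bij_betw_Vmap[OF pos(2) assms(1)] Vmap_commute Vmap_apply
      Vmap_preimage_Spc[OF pos(1) assms(2)] Vmap_preimage_Spc[OF pos(2) assms(1)]
      max_cone_eq[of _ d r] max_cone_eq[of _ r d]
      strict_dual_pair_Vmap[OF assms] strict_dual_pair_Vmap[OF assms(1,1)]
    by auto
qed

end
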